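(* Let $C\subseteq\mathbb{P}^2_{\mathbb{Q}}$ be the conic $X^2+Y^2+Z^2=0$, let $V\subseteq\operatorname{Aut}(C)$ be the Klein four-group generated by $[X:Y:Z]\mapsto[-X:-Y:Z]$ and $[X:Y:Z]\mapsto[X:-Y:-Z]$, and let $K'=\bigcup_{m\ \mathrm{odd}}K_m$ be the compositum of the cyclotomic fields $K_m$ with $m$ odd. Let $D$ be a twist of $C$ by a cocycle $\psi\colon\operatorname{Gal}(K'/\mathbb{Q})\to V$ (with trivial Galois action on $V$). Then $D$ has no rational points.
   Context: $K_m=\mathbb{Q}(e^{2\pi i/m})$. The twist of $C$ by $\psi$ is a curve $D$ over $\mathbb{Q}$ together with an isomorphism $F\colon C_{K'}\to D_{K'}$ such that $F^{-1}\circ\sigma(F)=\psi(\sigma)$ for all $\sigma\in\operatorname{Gal}(K'/\mathbb{Q})$. *)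

theory Defs
  imports "HOL-Analysis.Analysis"
begin

definition is_subfield :: "complex set \<Rightarrow> bool" where
  "is_subfield F \<longleftrightarrow> 0 \<in> F \<and> 1 \<in> F \<and>
     (\<forall>x\<in>F. \<forall>y\<in>F. x + y \<in> F \<and> x - y \<in> F \<and> x * y \<in> F) \<and>
     (\<forall>x\<in>F. x \<noteq> 0 \<longrightarrow> inverse x \<in> F)"

definition cyc_field :: "nat \<Rightarrow> complex set" where
  "cyc_field m = \<Inter>{F. is_subfield F \<and> cis (2 * pi / real m) \<in> F}"

definition Kprime :: "complex set" where
  "Kprime = \<Union>{cyc_field m | m. odd m}"

definition galK :: "(complex \<Rightarrow> complex) set" where
  "galK = {\<sigma>. bij_betw \<sigma> Kprime Kprime \<and>
     (\<forall>x\<in>Kprime. \<forall>y\<in>Kprime. \<sigma> (x + y) = \<sigma> x + \<sigma> y \<and> \<sigma> (x * y) = \<sigma> x * \<sigma> y) \<and>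
     (\<forall>x. x \<notin> Kprime \<longrightarrow> \<sigma> x = x)}"

text \<open>Quadratic form attached to a 3x3 matrix; the conic C is given by qf (mat 1).\<close>
definition qf :: "complex^3^3 \<Rightarrow> complex^3 \<Rightarrow> complex" where
  "qf A x = (\<Sum>i\<in>UNIV. \<Sum>j\<in>UNIV. x$i * A$i$j * x$j)"

definition diag3 :: "complex \<Rightarrow> complex \<Rightarrow> complex \<Rightarrow> complex^3^3" where
  "diag3 a b c = (\<chi> i j. if i = j then (if i = 1 then a else if i = 2 then b else c) else 0)"

text \<open>The Klein four-group V generated by [X:Y:Z] -> [-X:-Y:Z] and [X:Y:Z] -> [X:-Y:-Z],
  represented by diagonal matrices (these are the chosen matrix representatives).\<close>
definition kleinV :: "(complex^3^3) set" where
  "kleinV = {mat 1, diag3 (-1) (-1) 1, diag3 1 (-1) (-1), diag3 (-1) 1 (-1)}"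

definition gal_mat :: "(complex \<Rightarrow> complex) \<Rightarrow> complex^3^3 \<Rightarrow> complex^3^3" where
  "gal_mat \<sigma> M = (\<chi> i j. \<sigma> (M$i$j))"

definition scale_mat :: "complex \<Rightarrow> complex^3^3 \<Rightarrow> complex^3^3" where
  "scale_mat c M = (\<chi> i j. c * M$i$j)"

end

theory Submission
  imports Defs "Berlekamp_Zassenhaus.Factor_Bound" "HOL-Library.Z2"
begin

text \<open>Let \<open>\<sigma>\<close> be the Frobenius at 2 of \<open>K'\<close>, which maps \<open>\<zeta>\<^sub>N\<close> to \<open>\<zeta>\<^sub>N\<^sup>2\<close> for odd \<open>N\<close>; it is
  an automorphism because \<open>\<zeta>\<^sub>N\<^sup>2\<close> is a conjugate of \<open>\<zeta>\<^sub>N\<close>, as \<open>X\<^sup>N - 1\<close> stays separable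
  modulo 2. A rational point of \<open>D\<close> pulls back along \<open>F\<close> to a point \<open>x\<close> of \<open>C\<close> over \<open>K'\<close> with
  \<open>\<sigma>(x) = c\<^sup>-\<^sup>1 \<psi>(\<sigma>) x\<close>, and \<open>\<psi>(\<sigma>)\<close> is diagonal with entries \<open>\<plusminus>1\<close>. Dividing by a nonzero
  coordinate gives \<open>b, c \<in> K'\<close> with \<open>\<sigma>(b) = \<plusminus>b\<close>, \<open>\<sigma>(c) = \<plusminus>c\<close> and \<open>1 + b\<^sup>2 + c\<^sup>2 = 0\<close>.
  In \<open>\<int>[\<zeta>\<^sub>N]\<close> we have \<open>y\<^sup>2 \<equiv> \<sigma>(y)\<close> modulo 2, so elements fixed by \<open>\<sigma>\<close> up to sign are
  idempotent modulo 2; after clearing denominators this drives a 2-adic descent, which ends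
  because \<open>1/2 \<notin> \<int>[\<zeta>\<^sub>N]\<close>.\<close>

no_notation Matrix.vec_index (infixl "$" 100)
hide_const (open) Matrix.mat Determinant.det module.smult UnivPoly.monom up_ring.coeff

definition rat_eval :: "rat poly \<Rightarrow> complex \<Rightarrow> complex" where
  "rat_eval p z = poly (map_poly of_rat p) z"

definition int_eval :: "int poly \<Rightarrow> complex \<Rightarrow> complex" where
  "int_eval p z = poly (of_int_poly p) z"

interpretation of_rat_poly_hom: map_poly_comm_ring_hom "of_rat :: rat \<Rightarrow> complex" ..

lemma rat_eval_0 [simp]: "rat_eval 0 z = 0"
  and rat_eval_1 [simp]: "rat_eval 1 z = 1"
  and rat_eval_const [simp]: "rat_eval [:c:] z = of_rat c"
  and rat_eval_pCons: "rat_eval (pCons a p) z = of_rat a + z * rat_eval p z"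
  and rat_eval_add [simp]: "rat_eval (p + q) z = rat_eval p z + rat_eval q z"
  and rat_eval_diff [simp]: "rat_eval (p - q) z = rat_eval p z - rat_eval q z"
  and rat_eval_mult [simp]: "rat_eval (p * q) z = rat_eval p z * rat_eval q z"
  and rat_eval_smult [simp]: "rat_eval (smult c p) z = of_rat c * rat_eval p z"
  and rat_eval_monom: "rat_eval (monom 1 n) z = z ^ n"
  and rat_eval_pcompose: "rat_eval (pcompose p q) z = rat_eval p (rat_eval q z)"
  and rat_eval_of_int_poly: "rat_eval (of_int_poly P) z = int_eval P z"
  by (simp_all add: rat_eval_def int_eval_def hom_distribs poly_monom poly_pcompose
      of_rat_hom.map_poly_pcompose map_poly_map_poly o_def)

lemma int_eval_0 [simp]: "int_eval 0 z = 0"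
  and int_eval_1 [simp]: "int_eval 1 z = 1"
  and int_eval_const [simp]: "int_eval [:c:] z = of_int c"
  and int_eval_pCons: "int_eval (pCons a p) z = of_int a + z * int_eval p z"
  and int_eval_add [simp]: "int_eval (p + q) z = int_eval p z + int_eval q z"
  and int_eval_diff [simp]: "int_eval (p - q) z = int_eval p z - int_eval q z"
  and int_eval_mult [simp]: "int_eval (p * q) z = int_eval p z * int_eval q z"
  and int_eval_smult [simp]: "int_eval (smult c p) z = of_int c * int_eval p z"
  and int_eval_monom: "int_eval (monom 1 n) z = z ^ n"
  and int_eval_pcompose: "int_eval (pcompose p q) z = int_eval p (int_eval q z)"
  by (simp_all add: int_eval_def hom_distribs poly_monom poly_pcompose
      of_int_hom.map_poly_pcompose)

lemma int_eval_X_square: "int_eval [:0, 0, 1:] z = z ^ 2"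
  by (simp add: int_eval_pCons power2_eq_square)

lemma rat_eval_X_square: "rat_eval [:0, 0, 1:] z = z ^ 2"
  by (simp add: rat_eval_pCons power2_eq_square)

section \<open>Polynomials over GF(2)\<close>

lemma bit_poly_add_self [simp]: "(x :: bit poly) + x = 0"
proof -
  have "x + x = 2 * x" by simp
  then show ?thesis by (simp add: numeral_poly)
qed

lemma bit_poly_uminus [simp]: "- (x :: bit poly) = x"
  using bit_poly_add_self[of x] by (metis add.inverse_unique)

lemma bit_poly_pcompose_square: "pcompose (q :: bit poly) [:0, 0, 1:] = q ^ 2"
proof (induction q)
  case (pCons a q)
  have "a * a = a" by (cases a) auto
  moreover have "pCons a q = [:a:] + [:0, 1:] * q"
    by (simp add: pCons_0_as_mult[symmetric])
  ultimately have "(pCons a q) ^ 2 = [:a:] + [:0, 0, 1:] * q ^ 2"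
    by (simp add: power2_eq_square algebra_simps flip: add.assoc)
  then show ?case using pCons by (simp add: pcompose_pCons)
qed simp

lemma separable_bit_poly_factor:
  fixes a b :: "bit poly"
  assumes ab: "a * b = monom 1 L + 1" and L: "odd L" and dvd: "a dvd b ^ 2"
  shows "degree a = 0"
proof -
  define f where "f = monom (1 :: bit) L + 1"
  have "(of_nat L :: bit) = 1"
    using L by (induction L) auto
  then have "pderiv f = monom 1 (L - 1)"
    unfolding f_def by (simp add: pderiv_add pderiv_monom)
  moreover have "[:0, 1:] * monom (1 :: bit) (L - 1) = monom 1 L"
    using L by (metis Suc_diff_1 odd_pos monom_Suc pCons_0_as_mult)
  \<comment> \<open>\<open>X^L + 1\<close> is separable over GF(2) because \<open>X f' + f = 1\<close>.\<close>
  ultimately have sep: "[:0, 1:] * pderiv f + f = 1"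
    unfolding f_def by (simp add: add.assoc[symmetric])
  obtain k where k: "b * b = a * k"
    using dvd by (metis dvdE power2_eq_square)
  have fab: "f = a * b"
    using ab unfolding f_def by simp
  have "b = b * ([:0, 1:] * pderiv f + f)"
    using sep by simp
  also have "\<dots> = a * ([:0, 1:] * b * pderiv b + [:0, 1:] * pderiv a * k + b * b)"
    unfolding fab by (simp add: pderiv_mult algebra_simps flip: k)
  finally obtain m where m: "b = a * m"
    by (metis dvdE dvd_triv_left)
  have "pderiv f = a * (a * pderiv m)"
    unfolding fab m by (simp add: pderiv_mult algebra_simps)
  then have "a dvd [:0, 1:] * pderiv f + f"
    by (metis dvd_add dvd_mult dvd_triv_left fab)
  then have "a dvd 1"
    using sep by simp
  then show ?thesis
    by (simp add: is_unit_iff_degree)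
qed

section \<open>Minimal polynomials of roots of unity\<close>

lemma rat_eval_min_poly:
  assumes "f \<noteq> 0" and "rat_eval f z = 0"
  obtains g where "g \<noteq> 0" and "\<And>r. rat_eval r z = 0 \<longleftrightarrow> g dvd r"
proof -
  let ?P = "\<lambda>n. \<exists>g. g \<noteq> 0 \<and> rat_eval g z = 0 \<and> degree g = n"
  obtain g where g: "g \<noteq> 0" "rat_eval g z = 0" "degree g = (LEAST n. ?P n)"
    using LeastI[of ?P "degree f"] assms by blast
  have "rat_eval r z = 0 \<longleftrightarrow> g dvd r" for r
  proof
    assume r: "rat_eval r z = 0"
    have "rat_eval (r mod g) z = 0"
      using r g(2) by (simp flip: minus_div_mult_eq_mod)
    then have "r mod g = 0"
      using degree_mod_less[OF g(1), of r] Least_le[of ?P "degree (r mod g)"] g(3) by force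
    then show "g dvd r" by (rule mod_0_imp_dvd)
  qed (auto simp: g(2))
  with g(1) show thesis by (rule that)
qed

lemma rat_eval_inverse:
  assumes "f \<noteq> 0" and "rat_eval f z = 0" and p: "rat_eval p z \<noteq> 0"
  obtains q where "rat_eval q z * rat_eval p z = 1"
proof -
  obtain g where g0: "g \<noteq> 0" and g: "\<And>r. rat_eval r z = 0 \<longleftrightarrow> g dvd r"
    using rat_eval_min_poly assms(1,2) by blast
  define d where "d = gcd g p"
  define t where "t = snd (bezout_coefficients g p)"
  have "fst (bezout_coefficients g p) * g + t * p = d"
    unfolding t_def d_def by (rule bezout_coefficients_fst_snd)
  then have dt: "rat_eval d z = rat_eval t z * rat_eval p z"
    using g[of g] by (metis dvd_refl mult_zero_right rat_eval_add rat_eval_mult add_0)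
  have d: "rat_eval d z \<noteq> 0"
    using g[of d] g[of p] p d_def by (metis dvd_trans gcd_dvd2)
  obtain e where e: "g = d * e"
    unfolding d_def by (metis dvdE gcd_dvd1)
  then have "rat_eval e z = 0"
    using g[of g] d by simp
  then obtain k where "e = g * k"
    using g by (blast elim: dvdE)
  with e g0 have dk: "d * k = 1"
    by (metis mult.assoc mult.commute mult_cancel_left1)
  have "rat_eval (t * k) z * rat_eval p z = rat_eval (d * k) z"
    using dt by (simp add: ac_simps)
  also have "\<dots> = 1"
    using dk by simp
  finally show thesis
    by (rule that)
qed

text \<open>By the Gauss lemma the primitive integer multiple of the minimal polynomial over \<open>\<rat>\<close>
  also generates the ideal of integer polynomials vanishing at \<open>z\<close>.\<close>

lemma int_min_poly:
  assumes "f \<noteq> 0" and "rat_eval f z = 0"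
  obtains G where "\<And>r. rat_eval r z = 0 \<longleftrightarrow> of_int_poly G dvd r"
    and "\<And>P. int_eval P z = 0 \<longleftrightarrow> G dvd P"
proof -
  obtain g where g: "\<And>r. rat_eval r z = 0 \<longleftrightarrow> g dvd r"
    using rat_eval_min_poly assms by blast
  obtain c G where cG: "rat_to_normalized_int_poly g = (c, G)"
    by force
  have rat: "rat_eval r z = 0 \<longleftrightarrow> of_int_poly G dvd r" for r
    using g[of r] rat_to_normalized_int_poly(1,2)[OF cG] by (simp add: smult_dvd_iff)
  have "int_eval P z = 0 \<longleftrightarrow> G dvd P" for P
  proof
    assume "int_eval P z = 0"
    then obtain h where "of_int_poly P = g * h"
      using g[of "of_int_poly P"] by (auto simp: rat_eval_of_int_poly elim: dvdE)
    then show "G dvd P"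
      using rat_to_int_factor_explicit[OF _ cG] by (metis dvd_triv_left)
  next
    assume "G dvd P"
    moreover have "int_eval G z = 0"
      using rat[of "of_int_poly G"] by (simp add: rat_eval_of_int_poly)
    ultimately show "int_eval P z = 0"
      by (auto elim: dvdE)
  qed
  with rat show thesis by (rule that)
qed

lemma lead_coeff_monom_minus_1:
  assumes "n > 0"
  shows "lead_coeff (monom (1 :: 'a :: comm_ring_1) n - 1) = 1"
proof -
  have "coeff (monom (1 :: 'a) n - 1) n = 1"
    using assms by (simp add: coeff_monom)
  moreover have "degree (monom (1 :: 'a) n - 1) \<le> n"
    by (metis degree_diff_le degree_monom_le degree_1 le_zero_eq linear)
  ultimately show ?thesis
    by (metis le_antisym le_degree zero_neq_one)
qed

lemma root_of_unity_min_poly: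
  assumes root: "\<zeta> ^ L = 1" and L: "L > 0"
  obtains G where "\<And>r. rat_eval r \<zeta> = 0 \<longleftrightarrow> of_int_poly G dvd r"
    and "\<And>P. int_eval P \<zeta> = 0 \<longleftrightarrow> G dvd P"
    and "G dvd monom 1 L - 1"
    and "degree (of_int_poly G :: bit poly) > 0"
proof -
  have "monom (1 :: rat) L - 1 \<noteq> 0"
    using lead_coeff_monom_minus_1[OF L] by (metis leading_coeff_0_iff zero_neq_one)
  moreover have "rat_eval (monom 1 L - 1) \<zeta> = 0"
    using root by (simp add: rat_eval_monom)
  ultimately obtain G where rat: "\<And>r. rat_eval r \<zeta> = 0 \<longleftrightarrow> of_int_poly G dvd r"
    and int: "\<And>P. int_eval P \<zeta> = 0 \<longleftrightarrow> G dvd P"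
    using int_min_poly by blast
  have "G dvd monom 1 L - 1"
    using int[of "monom 1 L - 1"] root by (simp add: int_eval_monom)
  then obtain H where "monom 1 L - 1 = G * H"
    by (blast elim: dvdE)
  then have "lead_coeff G * lead_coeff H = 1"
    using lead_coeff_monom_minus_1[OF L] by (metis lead_coeff_mult)
  then have lead: "lead_coeff G = 1 \<or> lead_coeff G = -1"
    using zmult_eq_1_iff by blast
  then have "degree (of_int_poly G :: bit poly) = degree G"
    by (intro map_poly_degree_eq) auto
  moreover have "degree G > 0"
  proof (rule ccontr)
    assume "\<not> degree G > 0"
    then have "G = [:lead_coeff G:]"
      by (metis degree_0_id neq0_conv)
    then have "G dvd 1"
      using lead is_unit_poly_iff by fastforce
    then show False
      using int[of 1] by simp
  qed
  ultimately show thesis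
    using that rat int \<open>G dvd monom 1 L - 1\<close> by simp
qed

lemma root_of_unity_half_not_integral:
  assumes "\<zeta> ^ L = 1" and "L > 0"
  shows "2 * int_eval P \<zeta> \<noteq> 1"
proof
  assume half: "2 * int_eval P \<zeta> = 1"
  obtain G where int: "\<And>P. int_eval P \<zeta> = 0 \<longleftrightarrow> G dvd P"
    and deg: "degree (of_int_poly G :: bit poly) > 0"
    using root_of_unity_min_poly assms by blast
  have "G dvd smult 2 P - 1"
    using int[of "smult 2 P - 1"] half by simp
  then have "(of_int_poly G :: bit poly) dvd of_int_poly (smult 2 P - 1)"
    by (rule of_int_poly_hom.hom_dvd)
  also have "(of_int_poly (smult 2 P - 1) :: bit poly) = 1"
    by (simp add: hom_distribs of_int_hom.map_poly_hom_smult)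
  finally show False
    using deg by (simp add: is_unit_iff_degree)
qed

text \<open>Write \<open>X\<^sup>L - 1 = G H\<close> with \<open>G\<close> the minimal polynomial of \<open>\<zeta>\<close>. If \<open>G(\<zeta>\<^sup>2) \<noteq> 0\<close> then
  \<open>G\<close> divides \<open>H(X\<^sup>2)\<close>, which is \<open>H\<^sup>2\<close> modulo 2, contradicting separability of \<open>X\<^sup>L - 1\<close> mod 2.\<close>

lemma odd_root_of_unity_conjugate:
  assumes root: "\<zeta> ^ L = 1" and L: "odd L" and r: "rat_eval r \<zeta> = 0"
  shows "rat_eval r (\<zeta> ^ 2) = 0"
proof -
  obtain G where rat: "\<And>r. rat_eval r \<zeta> = 0 \<longleftrightarrow> of_int_poly G dvd r"
    and int: "\<And>P. int_eval P \<zeta> = 0 \<longleftrightarrow> G dvd P"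
    and "G dvd monom 1 L - 1" and deg: "degree (of_int_poly G :: bit poly) > 0"
    using root_of_unity_min_poly root L odd_pos by blast
  then obtain H where GH: "monom 1 L - 1 = G * H"
    by (blast elim: dvdE)
  have G: "int_eval G (\<zeta> ^ 2) = 0"
  proof (rule ccontr)
    assume "int_eval G (\<zeta> ^ 2) \<noteq> 0"
    moreover have "(\<zeta> ^ 2) ^ L = 1"
      using root by (metis power_mult mult.commute power_one)
    then have "int_eval G (\<zeta> ^ 2) * int_eval H (\<zeta> ^ 2) = 0"
      using arg_cong[OF GH, of "\<lambda>p. int_eval p (\<zeta> ^ 2)"] by (simp add: int_eval_monom)
    ultimately have "int_eval (pcompose H [:0, 0, 1:]) \<zeta> = 0"
      unfolding int_eval_pcompose int_eval_X_square by simp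
    then have "(of_int_poly G :: bit poly) dvd of_int_poly (pcompose H [:0, 0, 1:])"
      using int of_int_poly_hom.hom_dvd by blast
    also have "(of_int_poly (pcompose H [:0, 0, 1:]) :: bit poly) = (of_int_poly H) ^ 2"
      by (simp add: of_int_hom.map_poly_pcompose flip: bit_poly_pcompose_square)
    finally have "(of_int_poly G :: bit poly) dvd (of_int_poly H) ^ 2" .
    moreover have "(of_int_poly G :: bit poly) * of_int_poly H = monom 1 L + 1"
      using arg_cong[OF GH, of "of_int_poly :: int poly \<Rightarrow> bit poly"]
      by (simp add: hom_distribs) (metis bit_poly_uminus diff_conv_add_uminus)
    ultimately show False
      using separable_bit_poly_factor L deg by simp
  qed
  from r obtain k where "r = of_int_poly G * k"
    using rat by (blast elim: dvdE)
  with G show ?thesis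
    by (simp add: rat_eval_of_int_poly)
qed

section \<open>Cyclotomic fields and the Frobenius at 2\<close>

definition zeta :: "nat \<Rightarrow> complex" where
  "zeta N = cis (2 * pi / real N)"

lemma zeta_pow_self: "N > 0 \<Longrightarrow> zeta N ^ N = 1"
  unfolding zeta_def Complex.DeMoivre by simp

lemma zeta_mult: "N > 0 \<Longrightarrow> M > 0 \<Longrightarrow> zeta N = zeta (N * M) ^ M"
  unfolding zeta_def Complex.DeMoivre by (simp add: field_simps)

lemma rat_eval_zeta_mult:
  "N > 0 \<Longrightarrow> M > 0 \<Longrightarrow> rat_eval p (zeta N) = rat_eval (pcompose p (monom 1 M)) (zeta (N * M))"
  by (simp add: rat_eval_pcompose rat_eval_monom flip: zeta_mult)

lemma is_subfield_of_rat:
  assumes F: "is_subfield F"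
  shows "of_rat q \<in> F"
proof -
  have nat: "of_nat n \<in> F" for n
    using F by (induction n) (auto simp: is_subfield_def)
  have int: "of_int n \<in> F" for n
  proof -
    have "(of_int n :: complex) = of_nat (nat n) - of_nat (nat (- n))"
      by (cases "n \<ge> 0") simp_all
    then show ?thesis
      using F nat unfolding is_subfield_def by metis
  qed
  obtain a b where ab: "quotient_of q = (a, b)"
    by force
  have "q = of_int a / of_int b"
    by (rule quotient_of_div[OF ab])
  then have "of_rat q = (of_int a :: complex) * inverse (of_int b)"
    by (simp add: of_rat_mult of_rat_inverse divide_inverse)
  moreover have "inverse (of_int b :: complex) \<in> F"
    using F int[of b] quotient_of_denom_pos[OF ab] unfolding is_subfield_def by simp
  ultimately show ?thesis
    using F int[of a] unfolding is_subfield_def by metis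
qed

lemma is_subfield_rat_eval:
  assumes F: "is_subfield F" and z: "z \<in> F"
  shows "rat_eval p z \<in> F"
proof (induction p)
  case (pCons a p)
  then show ?case
    using F z is_subfield_of_rat[OF F, of a] unfolding rat_eval_pCons is_subfield_def by metis
qed (use F in \<open>simp add: is_subfield_def\<close>)

lemma is_subfield_range_rat_eval:
  assumes "f \<noteq> 0" and "rat_eval f z = 0"
  shows "is_subfield (range (\<lambda>p. rat_eval p z))"
proof -
  have "inverse (rat_eval p z) \<in> range (\<lambda>p. rat_eval p z)" if "rat_eval p z \<noteq> 0" for p
    using rat_eval_inverse[OF assms that] by (metis inverse_unique mult.commute rangeI)
  then show ?thesis
    unfolding is_subfield_def
    by (auto simp flip: rat_eval_add rat_eval_diff rat_eval_mult)
      (metis rangeI rat_eval_0, metis rangeI rat_eval_1)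
qed

lemma cyc_field_eq:
  assumes N: "N > 0"
  shows "cyc_field N = range (\<lambda>p. rat_eval p (zeta N))"
proof
  have "zeta N = rat_eval [:0, 1:] (zeta N)"
    by (simp add: rat_eval_pCons)
  moreover have "monom (1 :: rat) N - 1 \<noteq> 0"
    using lead_coeff_monom_minus_1[OF N] by (metis leading_coeff_0_iff zero_neq_one)
  then have "is_subfield (range (\<lambda>p. rat_eval p (zeta N)))"
    using zeta_pow_self[OF N]
    by (intro is_subfield_range_rat_eval[of "monom 1 N - 1"]) (simp_all add: rat_eval_monom)
  ultimately show "cyc_field N \<subseteq> range (\<lambda>p. rat_eval p (zeta N))"
    unfolding cyc_field_def by (intro Inter_lower) (auto simp: zeta_def)
  show "range (\<lambda>p. rat_eval p (zeta N)) \<subseteq> cyc_field N"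
    unfolding cyc_field_def using is_subfield_rat_eval by (auto simp: zeta_def)
qed

lemma Kprime_iff: "x \<in> Kprime \<longleftrightarrow> (\<exists>N p. odd N \<and> x = rat_eval p (zeta N))"
  unfolding Kprime_def by (fastforce simp: cyc_field_eq odd_pos)

lemma Kprime_common_zeta:
  assumes "x \<in> Kprime" and "y \<in> Kprime"
  obtains N p q where "odd N" and "x = rat_eval p (zeta N)" and "y = rat_eval q (zeta N)"
proof -
  obtain N1 p1 N2 p2 where N1: "odd N1" "x = rat_eval p1 (zeta N1)"
    and N2: "odd N2" "y = rat_eval p2 (zeta N2)"
    using assms Kprime_iff by metis
  show thesis
    using rat_eval_zeta_mult[of N1 N2 p1] rat_eval_zeta_mult[of N2 N1 p2] N1 N2
    by (intro that[of "N1 * N2"]) (auto simp: odd_pos mult.commute)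
qed

lemma Kprime_add:
  assumes "x \<in> Kprime" and "y \<in> Kprime"
  shows "x + y \<in> Kprime"
proof -
  obtain N p q where "odd N" and "x = rat_eval p (zeta N)" and "y = rat_eval q (zeta N)"
    using Kprime_common_zeta[OF assms] .
  then show ?thesis
    using Kprime_iff[of "x + y"] by (metis rat_eval_add)
qed

lemma Kprime_diff:
  assumes "x \<in> Kprime" and "y \<in> Kprime"
  shows "x - y \<in> Kprime"
proof -
  obtain N p q where "odd N" and "x = rat_eval p (zeta N)" and "y = rat_eval q (zeta N)"
    using Kprime_common_zeta[OF assms] .
  then show ?thesis
    using Kprime_iff[of "x - y"] by (metis rat_eval_diff)
qed

lemma Kprime_mult:
  assumes "x \<in> Kprime" and "y \<in> Kprime"
  shows "x * y \<in> Kprime"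
proof -
  obtain N p q where "odd N" and "x = rat_eval p (zeta N)" and "y = rat_eval q (zeta N)"
    using Kprime_common_zeta[OF assms] .
  then show ?thesis
    using Kprime_iff[of "x * y"] by (metis rat_eval_mult)
qed

lemma Kprime_of_rat: "of_rat q \<in> Kprime"
  using Kprime_iff[of "of_rat q"] by (metis rat_eval_const odd_one)

lemma is_subfield_cyc_field: "is_subfield (cyc_field N)"
  unfolding cyc_field_def is_subfield_def by auto

lemma Kprime_inverse:
  assumes "x \<in> Kprime"
  shows "inverse x \<in> Kprime"
proof -
  obtain N where "odd N" and "x \<in> cyc_field N"
    using assms unfolding Kprime_def by blast
  moreover have "inverse x \<in> cyc_field N" if "x \<in> cyc_field N"
    using is_subfield_cyc_field[of N] that unfolding is_subfield_def
    by (cases "x = 0") auto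
  ultimately show ?thesis
    unfolding Kprime_def by blast
qed

lemma Kprime_divide: "x \<in> Kprime \<Longrightarrow> y \<in> Kprime \<Longrightarrow> x / y \<in> Kprime"
  by (simp add: divide_inverse Kprime_mult Kprime_inverse)

lemma rat_eval_zeta_square_cong:
  assumes N: "odd N" and M: "odd M" and eq: "rat_eval p (zeta N) = rat_eval q (zeta M)"
  shows "rat_eval p (zeta N ^ 2) = rat_eval q (zeta M ^ 2)"
proof -
  define L where "L = N * M"
  have L: "odd L"
    unfolding L_def using N M by simp
  have N_L: "zeta N = zeta L ^ M"
    unfolding L_def by (intro zeta_mult odd_pos N M)
  have M_L: "zeta M = zeta L ^ N"
    unfolding L_def mult.commute[of N] by (intro zeta_mult odd_pos N M)
  define r where "r = pcompose p (monom 1 M) - pcompose q (monom 1 N)"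
  have "rat_eval r (zeta L) = 0"
    using eq unfolding r_def N_L M_L by (simp add: rat_eval_pcompose rat_eval_monom)
  then have "rat_eval r (zeta L ^ 2) = 0"
    using odd_root_of_unity_conjugate zeta_pow_self L odd_pos by blast
  then show ?thesis
    unfolding r_def N_L M_L by (simp add: rat_eval_pcompose rat_eval_monom flip: power_mult)
      (simp add: mult.commute)
qed

text \<open>The choice below does not depend on the representation of \<open>x\<close>, by
  \<open>rat_eval_zeta_square_cong\<close>.\<close>

definition frob :: "complex \<Rightarrow> complex" where
  "frob x = (if x \<in> Kprime
     then (SOME y. \<exists>N p. odd N \<and> x = rat_eval p (zeta N) \<and> y = rat_eval p (zeta N ^ 2))
     else x)"

lemma frob_rat_eval:
  assumes N: "odd N"
  shows "frob (rat_eval p (zeta N)) = rat_eval p (zeta N ^ 2)"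
proof -
  let ?x = "rat_eval p (zeta N)"
  have "(SOME y. \<exists>N' p'. odd N' \<and> ?x = rat_eval p' (zeta N') \<and> y = rat_eval p' (zeta N' ^ 2))
      = rat_eval p (zeta N ^ 2)"
  proof (rule someI2_ex)
    show "\<exists>y N' p'. odd N' \<and> ?x = rat_eval p' (zeta N') \<and> y = rat_eval p' (zeta N' ^ 2)"
      using N by blast
  qed (use rat_eval_zeta_square_cong[OF N] in metis)
  moreover have "?x \<in> Kprime"
    using N Kprime_iff by blast
  ultimately show ?thesis
    unfolding frob_def by simp
qed

lemma frob_add:
  assumes "x \<in> Kprime" and "y \<in> Kprime"
  shows "frob (x + y) = frob x + frob y"
proof -
  obtain N p q where N: "odd N" and "x = rat_eval p (zeta N)" and "y = rat_eval q (zeta N)"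
    using Kprime_common_zeta[OF assms] .
  then show ?thesis
    using frob_rat_eval[OF N, of "p + q"] frob_rat_eval[OF N, of p] frob_rat_eval[OF N, of q] by simp
qed

lemma frob_diff:
  assumes "x \<in> Kprime" and "y \<in> Kprime"
  shows "frob (x - y) = frob x - frob y"
proof -
  obtain N p q where N: "odd N" and "x = rat_eval p (zeta N)" and "y = rat_eval q (zeta N)"
    using Kprime_common_zeta[OF assms] .
  then show ?thesis
    using frob_rat_eval[OF N, of "p - q"] frob_rat_eval[OF N, of p] frob_rat_eval[OF N, of q] by simp
qed

lemma frob_mult:
  assumes "x \<in> Kprime" and "y \<in> Kprime"
  shows "frob (x * y) = frob x * frob y"
proof -
  obtain N p q where N: "odd N" and "x = rat_eval p (zeta N)" and "y = rat_eval q (zeta N)"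
    using Kprime_common_zeta[OF assms] .
  then show ?thesis
    using frob_rat_eval[OF N, of "p * q"] frob_rat_eval[OF N, of p] frob_rat_eval[OF N, of q] by simp
qed

lemma frob_of_rat: "frob (of_rat q) = of_rat q"
  using frob_rat_eval[of 1 "[:q:]"] by simp

lemma frob_Kprime:
  assumes "x \<in> Kprime"
  shows "frob x \<in> Kprime"
proof -
  obtain N p where N: "odd N" and "x = rat_eval p (zeta N)"
    using assms Kprime_iff by blast
  then have "frob x = rat_eval (pcompose p [:0, 0, 1:]) (zeta N)"
    unfolding rat_eval_pcompose rat_eval_X_square by (simp add: frob_rat_eval)
  then show ?thesis
    using N Kprime_iff by blast
qed

lemma frob_nonzero:
  assumes "x \<in> Kprime" and "x \<noteq> 0"
  shows "frob x \<noteq> 0"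
proof -
  have "frob x * frob (inverse x) = 1"
    using frob_mult[OF assms(1) Kprime_inverse[OF assms(1)]] frob_of_rat[of 1] assms(2) by simp
  then show ?thesis by auto
qed

lemma frob_divide:
  assumes "x \<in> Kprime" and "y \<in> Kprime" and "y \<noteq> 0"
  shows "frob (x / y) = frob x / frob y"
  using frob_mult[OF Kprime_divide[OF assms(1,2)] assms(2)] frob_nonzero[OF assms(2,3)] assms(3)
  by (simp add: eq_divide_eq)

lemma frob_surj:
  assumes "y \<in> Kprime"
  shows "y \<in> frob ` Kprime"
proof -
  obtain N p where N: "odd N" and y: "y = rat_eval p (zeta N)"
    using assms Kprime_iff by blast
  define k where "k = (N + 1) div 2"
  have "2 * k = N + 1"
    unfolding k_def using N by presburger
  then have "(zeta N ^ 2) ^ k = zeta N"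
    using zeta_pow_self[OF odd_pos[OF N]] by (metis power_mult power_add power_one_right mult_1)
  then have "frob (rat_eval (pcompose p (monom 1 k)) (zeta N)) = y"
    unfolding frob_rat_eval[OF N] y by (simp add: rat_eval_pcompose rat_eval_monom)
  moreover have "rat_eval (pcompose p (monom 1 k)) (zeta N) \<in> Kprime"
    using N Kprime_iff by blast
  ultimately show ?thesis by blast
qed

lemma frob_in_galK: "frob \<in> galK"
proof -
  have "inj_on frob Kprime"
  proof (rule inj_onI)
    fix x y assume x: "x \<in> Kprime" and y: "y \<in> Kprime" and "frob x = frob y"
    then have "frob (x - y) = 0"
      by (simp add: frob_diff)
    then show "x = y"
      using frob_nonzero Kprime_diff[OF x y] by fastforce
  qed
  moreover have "frob ` Kprime = Kprime"
    using frob_Kprime frob_surj by blast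
  moreover have "frob x = x" if "x \<notin> Kprime" for x
    using that by (simp add: frob_def)
  ultimately show ?thesis
    unfolding galK_def bij_betw_def using frob_add frob_mult by blast
qed

section \<open>A 2-adic descent in \<open>\<int>[\<zeta>\<^sub>N]\<close>\<close>

definition int_adjoin :: "complex \<Rightarrow> complex set" where
  "int_adjoin z = range (\<lambda>P. int_eval P z)"

definition even_in :: "complex set \<Rightarrow> complex \<Rightarrow> bool" where
  "even_in R x \<longleftrightarrow> (\<exists>w\<in>R. x = 2 * w)"

lemma int_adjoin_add: "x \<in> int_adjoin z \<Longrightarrow> y \<in> int_adjoin z \<Longrightarrow> x + y \<in> int_adjoin z"
  unfolding int_adjoin_def by (auto simp flip: int_eval_add)

lemma int_adjoin_diff: "x \<in> int_adjoin z \<Longrightarrow> y \<in> int_adjoin z \<Longrightarrow> x - y \<in> int_adjoin z"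
  unfolding int_adjoin_def by (auto simp flip: int_eval_diff)

lemma int_adjoin_mult: "x \<in> int_adjoin z \<Longrightarrow> y \<in> int_adjoin z \<Longrightarrow> x * y \<in> int_adjoin z"
  unfolding int_adjoin_def by (auto simp flip: int_eval_mult)

lemma int_adjoin_of_int: "of_int k \<in> int_adjoin z"
  unfolding int_adjoin_def by (rule range_eqI[of _ _ "[:k:]"]) simp

lemma int_adjoin_of_nat: "of_nat k \<in> int_adjoin z"
  using int_adjoin_of_int[of "int k"] by simp

lemma int_eval_square_congruent: "even_in (int_adjoin z) (int_eval P z ^ 2 - int_eval P (z ^ 2))"
proof (induction P)
  case 0
  then show ?case
    using int_adjoin_of_int[of 0] by (auto simp: even_in_def)
next
  case (pCons a P)
  then obtain W where W: "int_eval P z ^ 2 - int_eval P (z ^ 2) = 2 * int_eval W z"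
    by (auto simp: even_in_def int_adjoin_def)
  define t where "t = (a * a - a) div 2"
  have "2 * t = a * a - a"
    unfolding t_def by simp
  then have t: "2 * (of_int t :: complex) = of_int a * of_int a - of_int a"
    by (metis of_int_diff of_int_mult of_int_numeral)
  define W' where "W' = [:t:] + smult a ([:0, 1:] * P) + [:0, 0, 1:] * W"
  have "int_eval W' z = of_int t + of_int a * (z * int_eval P z) + z ^ 2 * int_eval W z"
    unfolding W'_def by (simp add: int_eval_pCons power2_eq_square algebra_simps)
  then have "int_eval (pCons a P) z ^ 2 - int_eval (pCons a P) (z ^ 2) = 2 * int_eval W' z"
    using W t by (simp add: int_eval_pCons power2_eq_square algebra_simps)
  then show ?case
    by (auto simp: even_in_def int_adjoin_def)
qed

lemma frob_int_eval: "odd N \<Longrightarrow> frob (int_eval P (zeta N)) = int_eval P (zeta N ^ 2)"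
  using frob_rat_eval[of N "of_int_poly P"] by (simp add: rat_eval_of_int_poly)

lemma int_adjoin_frob_sign:
  assumes N: "odd N" and x: "x \<in> int_adjoin (zeta N)" and frob_x: "frob x \<in> {x, - x}"
  shows "even_in (int_adjoin (zeta N)) (x ^ 2 - x)"
proof -
  obtain P where P: "x = int_eval P (zeta N)"
    using x unfolding int_adjoin_def by blast
  obtain w where w: "w \<in> int_adjoin (zeta N)" "x ^ 2 - frob x = 2 * w"
    using int_eval_square_congruent[of "zeta N" P] frob_int_eval[OF N] P
    by (auto simp: even_in_def)
  show ?thesis
  proof (cases "frob x = x")
    case True
    then show ?thesis
      using w by (auto simp: even_in_def)
  next
    case False
    then have "x ^ 2 - x = 2 * (w - x)"
      using w(2) frob_x by (simp add: algebra_simps)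
    moreover have "w - x \<in> int_adjoin (zeta N)"
      using w(1) x by (rule int_adjoin_diff)
    ultimately show ?thesis
      unfolding even_in_def by blast
  qed
qed

text \<open>If \<open>X \<equiv> X\<^sup>2 (mod 2)\<close> then \<open>X\<^sup>2\<close> is idempotent modulo 4. Squaring \<open>X\<^sup>2 + Y\<^sup>2 = -Z\<^sup>2\<close> thus
  gives \<open>X\<^sup>2 + Y\<^sup>2 + X\<^sup>2Y\<^sup>2 \<equiv> 0 (mod 2)\<close>; multiplying by \<open>X\<^sup>2\<close> yields \<open>X \<equiv> X\<^sup>2 \<equiv> 0 (mod 2)\<close>.
  The identity below is the explicit form of this computation.\<close>

lemma sum_squares_idempotents_mod_2:
  fixes X Y Z a b c :: "'a :: {idom, ring_char_0}"
  assumes hx: "X ^ 2 - X = 2 * a" and hy: "Y ^ 2 - Y = 2 * b" and hz: "Z ^ 2 - Z = 2 * c"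
    and sum: "X ^ 2 + Y ^ 2 + Z ^ 2 = 0"
  shows "X = 2 * (X ^ 2 * (c * (c + Z) - a * (a + X) - b * (b + Y)) - X ^ 2 * Y ^ 2
      - 2 * (a * (a + X)) - 2 * (a * (a + X)) * Y ^ 2 - a)"
proof -
  have hXX: "X * X = X + 2 * a" and hYY: "Y * Y = Y + 2 * b" and hZZ: "Z * Z = Z + 2 * c"
    using hx hy hz by (simp_all add: power2_eq_square algebra_simps)
  define P Q T where "P = X ^ 2" and "Q = Y ^ 2" and "T = Z ^ 2"
  define \<alpha> \<beta> \<gamma> where "\<alpha> = a * (a + X)" and "\<beta> = b * (b + Y)" and "\<gamma> = c * (c + Z)"
  have P2: "P ^ 2 = P + 4 * \<alpha>"
    unfolding P_def \<alpha>_def power2_eq_square by (simp add: hXX algebra_simps)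
  have Q2: "Q ^ 2 = Q + 4 * \<beta>"
    unfolding Q_def \<beta>_def power2_eq_square by (simp add: hYY algebra_simps)
  have T2: "T ^ 2 = T + 4 * \<gamma>"
    unfolding T_def \<gamma>_def power2_eq_square by (simp add: hZZ algebra_simps)
  have T: "T = - (P + Q)"
    using sum unfolding P_def Q_def T_def by (metis add_eq_0_iff)
  have "T ^ 2 = P ^ 2 + 2 * (P * Q) + Q ^ 2"
    unfolding T by (simp add: power2_eq_square algebra_simps)
  then have E: "T + 4 * \<gamma> = P + 4 * \<alpha> + 2 * (P * Q) + Q + 4 * \<beta>"
    using P2 Q2 T2 by simp
  have "2 * (P + Q + P * Q - 2 * (\<gamma> - \<alpha> - \<beta>))
      = (P + 4 * \<alpha> + 2 * (P * Q) + Q + 4 * \<beta>) - (T + 4 * \<gamma>)"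
    unfolding T by (simp add: algebra_simps)
  also have "\<dots> = 0"
    using E by simp
  finally have d0: "P + Q + P * Q - 2 * (\<gamma> - \<alpha> - \<beta>) = 0"
    by (metis mult_eq_0_iff zero_neq_numeral)
  have "P - 2 * (P * (\<gamma> - \<alpha> - \<beta>) - P * Q - 2 * \<alpha> - 2 * \<alpha> * Q)
      = P * (P + Q + P * Q - 2 * (\<gamma> - \<alpha> - \<beta>)) - (P ^ 2 - P - 4 * \<alpha>) * (1 + Q)"
    by (simp add: power2_eq_square algebra_simps)
  also have "\<dots> = 0"
    using d0 P2 by simp
  finally have "P = 2 * (P * (\<gamma> - \<alpha> - \<beta>) - P * Q - 2 * \<alpha> - 2 * \<alpha> * Q)"
    by simp
  then show ?thesis
    using hx unfolding P_def Q_def \<alpha>_def \<beta>_def \<gamma>_def by (simp add: algebra_simps eq_diff_eq)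
qed

lemma frob_sign_sum_squares_even:
  assumes N: "odd N"
    and X: "X \<in> int_adjoin (zeta N)" and Y: "Y \<in> int_adjoin (zeta N)" and Z: "Z \<in> int_adjoin (zeta N)"
    and "frob X \<in> {X, - X}" and "frob Y \<in> {Y, - Y}" and "frob Z \<in> {Z, - Z}"
    and sum: "X ^ 2 + Y ^ 2 + Z ^ 2 = 0"
  shows "even_in (int_adjoin (zeta N)) X"
proof -
  obtain a b c where a: "a \<in> int_adjoin (zeta N)" "X ^ 2 - X = 2 * a"
    and b: "b \<in> int_adjoin (zeta N)" "Y ^ 2 - Y = 2 * b"
    and c: "c \<in> int_adjoin (zeta N)" "Z ^ 2 - Z = 2 * c"
    using int_adjoin_frob_sign[OF N] X Y Z assms(5-7) unfolding even_in_def by metis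
  have "X ^ 2 * (c * (c + Z) - a * (a + X) - b * (b + Y)) - X ^ 2 * Y ^ 2
      - 2 * (a * (a + X)) - 2 * (a * (a + X)) * Y ^ 2 - a \<in> int_adjoin (zeta N)"
    using X Y Z a(1) b(1) c(1) int_adjoin_of_int[of 2]
    by (simp add: power2_eq_square int_adjoin_add int_adjoin_diff int_adjoin_mult)
  then show ?thesis
    unfolding even_in_def using sum_squares_idempotents_mod_2[OF a(2) b(2) c(2) sum] by blast
qed

lemma rat_eval_clear_denominator:
  obtains d :: nat where "d > 0" and "of_nat d * rat_eval p z \<in> int_adjoin z"
proof -
  obtain d r where dr: "rat_to_int_poly p = (d, r)"
    by force
  have "p = smult (inverse (of_int d)) (of_int_poly r)" and d: "d > 0"
    using rat_to_int_poly[OF dr] by auto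
  then have "of_nat (nat d) * rat_eval p z = int_eval r z"
    by (simp add: rat_eval_of_int_poly of_rat_inverse)
  then show thesis
    using that[of "nat d"] d unfolding int_adjoin_def by simp
qed

lemma Kprime_common_denominator:
  assumes "b \<in> Kprime" and "c \<in> Kprime"
  obtains N n where "odd N" and "n > 0"
    and "of_nat n * b \<in> int_adjoin (zeta N)" and "of_nat n * c \<in> int_adjoin (zeta N)"
proof -
  obtain N p q where N: "odd N" and b: "b = rat_eval p (zeta N)" and c: "c = rat_eval q (zeta N)"
    using Kprime_common_zeta[OF assms] .
  obtain d1 d2 :: nat where "d1 > 0" and d1: "of_nat d1 * b \<in> int_adjoin (zeta N)"
    and "d2 > 0" and d2: "of_nat d2 * c \<in> int_adjoin (zeta N)"
    using rat_eval_clear_denominator b c by metis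
  have "of_nat d2 * (of_nat d1 * b) \<in> int_adjoin (zeta N)"
    and "of_nat d1 * (of_nat d2 * c) \<in> int_adjoin (zeta N)"
    using int_adjoin_mult[OF int_adjoin_of_nat d1] int_adjoin_mult[OF int_adjoin_of_nat d2] .
  then show thesis
    using \<open>d1 > 0\<close> \<open>d2 > 0\<close> by (intro that[OF N, of "d1 * d2"]) (simp_all add: ac_simps)
qed

text \<open>The descent step: in \<open>\<int>[\<zeta>\<^sub>N]\<close> every element fixed by the Frobenius up to sign is
  idempotent modulo 2, so \<open>n\<^sup>2 + (n b)\<^sup>2 + (n c)\<^sup>2 = 0\<close> forces \<open>n\<close>, \<open>n b\<close> and \<open>n c\<close> to be even
  there. As \<open>1/2 \<notin> \<int>[\<zeta>\<^sub>N]\<close>, the integer \<open>n\<close> is even and can be halved.\<close>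

lemma frob_sign_denominator_descent:
  assumes N: "odd N" and b: "b \<in> Kprime" and c: "c \<in> Kprime"
    and frob_b: "frob b \<in> {b, - b}" and frob_c: "frob c \<in> {c, - c}" and sum: "1 + b ^ 2 + c ^ 2 = 0"
    and "n > 0" and B: "of_nat n * b \<in> int_adjoin (zeta N)" and C: "of_nat n * c \<in> int_adjoin (zeta N)"
  obtains m where "m > 0" and "m < n"
    and "of_nat m * b \<in> int_adjoin (zeta N)" and "of_nat m * c \<in> int_adjoin (zeta N)"
proof -
  let ?R = "int_adjoin (zeta N)"
  have frob_n: "frob (of_nat n) = of_nat n"
    using frob_of_rat[of "of_nat n"] by simp
  have frob_scaled: "frob (of_nat n * x) \<in> {of_nat n * x, - (of_nat n * x)}"
    if "x \<in> Kprime" and "frob x \<in> {x, - x}" for x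
    using frob_mult[OF _ that(1), of "of_nat n"] frob_n that(2) Kprime_of_rat[of "of_nat n"] by auto
  have X: "of_nat n \<in> ?R" and FX: "frob (of_nat n) \<in> {of_nat n, - of_nat n}"
    using int_adjoin_of_nat frob_n by auto
  note FB = frob_scaled[OF b frob_b] and FC = frob_scaled[OF c frob_c]
  have "(of_nat n) ^ 2 + (of_nat n * b) ^ 2 + (of_nat n * c) ^ 2 = (of_nat n) ^ 2 * (1 + b ^ 2 + c ^ 2)"
    by (simp add: power_mult_distrib algebra_simps)
  then have "(of_nat n) ^ 2 + (of_nat n * b) ^ 2 + (of_nat n * c) ^ 2 = 0"
    using sum by simp
  then have "even_in ?R (of_nat n)" and "even_in ?R (of_nat n * b)" and "even_in ?R (of_nat n * c)"
    using frob_sign_sum_squares_even[OF N X B C FX FB FC] frob_sign_sum_squares_even[OF N B X C FB FX FC]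
      frob_sign_sum_squares_even[OF N C X B FC FX FB]
    by (simp_all add: algebra_simps)
  have "even n"
  proof (rule ccontr)
    assume "odd n"
    then obtain k where k: "n = 2 * k + 1"
      using oddE by blast
    obtain w where "w \<in> ?R" and "of_nat n = 2 * w"
      using \<open>even_in ?R (of_nat n)\<close> unfolding even_in_def by blast
    then have "w - of_nat k \<in> ?R" and half: "2 * (w - of_nat k) = 1"
      using int_adjoin_diff int_adjoin_of_nat unfolding k by (auto simp: algebra_simps)
    then obtain P where "w - of_nat k = int_eval P (zeta N)"
      unfolding int_adjoin_def by blast
    with half show False
      using root_of_unity_half_not_integral[OF zeta_pow_self] odd_pos[OF N] by auto
  qed
  then obtain m where m: "n = 2 * m"
    by blast
  obtain wb wc where "wb \<in> ?R" "of_nat n * b = 2 * wb" and "wc \<in> ?R" "of_nat n * c = 2 * wc"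
    using \<open>even_in ?R (of_nat n * b)\<close> \<open>even_in ?R (of_nat n * c)\<close> unfolding even_in_def by blast
  then show thesis
    using that[of m] \<open>n > 0\<close> unfolding m by simp
qed

lemma frob_sign_no_solution:
  assumes b: "b \<in> Kprime" and c: "c \<in> Kprime"
    and frob_b: "frob b \<in> {b, - b}" and frob_c: "frob c \<in> {c, - c}"
  shows "1 + b ^ 2 + c ^ 2 \<noteq> 0"
proof
  assume sum: "1 + b ^ 2 + c ^ 2 = 0"
  obtain N n where N: "odd N" and "n > 0"
    and "of_nat n * b \<in> int_adjoin (zeta N)" and "of_nat n * c \<in> int_adjoin (zeta N)"
    using Kprime_common_denominator[OF b c] .
  then show False
  proof (induction n rule: less_induct)
    case (less n)
    then show False
      using frob_sign_denominator_descent[OF N b c frob_b frob_c sum] by metis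
  qed
qed

lemma frob_eigen_sum_squares:
  assumes a: "a \<in> Kprime" and b: "b \<in> Kprime" and c: "c \<in> Kprime" and "\<mu> \<noteq> 0"
    and frob_a: "frob a \<in> {\<mu> * a, - (\<mu> * a)}" and frob_b: "frob b \<in> {\<mu> * b, - (\<mu> * b)}"
    and frob_c: "frob c \<in> {\<mu> * c, - (\<mu> * c)}"
    and sum: "a ^ 2 + b ^ 2 + c ^ 2 = 0"
  shows "a = 0"
proof (rule ccontr)
  assume a0: "a \<noteq> 0"
  have "frob (b / a) \<in> {b / a, - (b / a)}" and "frob (c / a) \<in> {c / a, - (c / a)}"
    using frob_a frob_b frob_c frob_divide[OF b a a0] frob_divide[OF c a a0] \<open>\<mu> \<noteq> 0\<close> a0
    by auto
  moreover have "1 + (b / a) ^ 2 + (c / a) ^ 2 = (a ^ 2 + b ^ 2 + c ^ 2) / a ^ 2"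
    using a0 by (simp add: field_simps power2_eq_square)
  ultimately show False
    using frob_sign_no_solution[OF Kprime_divide[OF b a] Kprime_divide[OF c a]] sum by simp
qed

section \<open>Points of the twist\<close>

lemma det_Kprime: "\<forall>i j. A $ i $ j \<in> Kprime \<Longrightarrow> det (A :: complex^3^3) \<in> Kprime"
  unfolding det_3 by (simp add: Kprime_add Kprime_diff Kprime_mult)

lemma Kprime_solve:
  fixes M :: "complex^3^3"
  assumes M: "\<forall>i j. M $ i $ j \<in> Kprime" and "invertible M" and y: "\<forall>i. y $ i \<in> Kprime"
  obtains x where "\<forall>k. x $ k \<in> Kprime" and "M *v x = y"
proof -
  have det: "det M \<noteq> 0"
    using \<open>invertible M\<close> by (simp add: invertible_det_nz)
  define x where "x = (\<chi> k. det (\<chi> i j. if j = k then y $ i else M $ i $ j) / det M)"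
  have "M *v x = y"
    using cramer[OF det, of x y] unfolding x_def by simp
  moreover have "x $ k \<in> Kprime" for k
    unfolding x_def using M y by (simp add: Kprime_divide det_Kprime)
  ultimately show thesis
    using that by blast
qed

lemma galK_mult_vec:
  fixes A :: "complex^3^3"
  assumes \<sigma>: "\<sigma> \<in> galK" and A: "\<forall>i j. A $ i $ j \<in> Kprime" and x: "\<forall>k. x $ k \<in> Kprime"
  shows "\<sigma> ((A *v x) $ i) = (gal_mat \<sigma> A *v (\<chi> k. \<sigma> (x $ k))) $ i"
proof -
  have add: "\<sigma> (a + b) = \<sigma> a + \<sigma> b" and mult: "\<sigma> (a * b) = \<sigma> a * \<sigma> b"
    if "a \<in> Kprime" "b \<in> Kprime" for a b
    using \<sigma> that unfolding galK_def by blast+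
  show ?thesis
    unfolding matrix_vector_mult_def sum_3 gal_mat_def
    using A x by (simp add: add mult Kprime_add Kprime_mult)
qed

lemma scale_mat_mult_vec: "scale_mat c M *v v = c *s (M *v v)"
  by (simp add: scale_mat_def matrix_vector_mult_def Finite_Cartesian_Product.vec_eq_iff
      sum_distrib_left mult.assoc)

lemma galK_twisted_fixed_point:
  fixes M D :: "complex^3^3"
  assumes \<sigma>: "\<sigma> \<in> galK" and M: "\<forall>i j. M $ i $ j \<in> Kprime" and "invertible M"
    and twist: "gal_mat \<sigma> M = scale_mat c M ** D"
    and x: "\<forall>k. x $ k \<in> Kprime" and fixed: "\<forall>i. \<sigma> ((M *v x) $ i) = (M *v x) $ i"
  shows "x = c *s (D *v (\<chi> k. \<sigma> (x $ k)))"
proof -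
  have "M *v x = gal_mat \<sigma> M *v (\<chi> k. \<sigma> (x $ k))"
    unfolding Finite_Cartesian_Product.vec_eq_iff using fixed galK_mult_vec[OF \<sigma> M x] by simp
  also have "\<dots> = c *s (M *v (D *v (\<chi> k. \<sigma> (x $ k))))"
    unfolding twist by (simp add: matrix_vector_mul_assoc[symmetric] scale_mat_mult_vec)
  also have "\<dots> = M *v (c *s (D *v (\<chi> k. \<sigma> (x $ k))))"
    by (simp add: matrix_vector_mult_def Finite_Cartesian_Product.vec_eq_iff sum_distrib_left
        algebra_simps)
  finally show ?thesis
    using \<open>invertible M\<close> by (metis invertible_def matrix_vector_mul_assoc matrix_vector_mul_lid)
qed

lemma kleinV_mult_vec:
  assumes "D \<in> kleinV"
  shows "(D *v v) $ k \<in> {v $ k, - v $ k}"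
  using assms exhaust_3[of k]
  unfolding kleinV_def
  by (auto simp: diag3_def matrix_vector_mult_def sum_3 Finite_Cartesian_Product.mat_def)

lemma frob_twisted_point_eigen:
  fixes M D :: "complex^3^3"
  assumes M: "\<forall>i j. M $ i $ j \<in> Kprime" and "invertible M"
    and twist: "gal_mat frob M = scale_mat c M ** D" and "D \<in> kleinV" and "c \<noteq> 0"
    and x: "\<forall>k. x $ k \<in> Kprime" and rat: "\<forall>i. (M *v x) $ i \<in> \<rat>"
  shows "frob (x $ k) \<in> {inverse c * x $ k, - (inverse c * x $ k)}"
proof -
  have "frob ((M *v x) $ i) = (M *v x) $ i" for i
    using rat[rule_format, of i] by (auto simp: Rats_def frob_of_rat)
  then have "x = c *s (D *v (\<chi> k. frob (x $ k)))"
    using galK_twisted_fixed_point[OF frob_in_galK M \<open>invertible M\<close> twist x] by blast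
  then have "c * (D *v (\<chi> k. frob (x $ k))) $ k = x $ k"
    by (metis vector_smult_component)
  then show ?thesis
    using kleinV_mult_vec[OF \<open>D \<in> kleinV\<close>, of "\<chi> k. frob (x $ k)" k] \<open>c \<noteq> 0\<close>
    by (auto simp: field_simps) (metis minus_minus)
qed

lemma qf_mat_1: "qf (mat 1) x = (x $ 1) ^ 2 + (x $ 2) ^ 2 + (x $ 3) ^ 2"
  unfolding qf_def sum_3 by (simp add: Finite_Cartesian_Product.mat_def power2_eq_square)

lemma frob_eigen_isotropic_eq_0:
  assumes x: "\<forall>k. x $ k \<in> Kprime" and "\<mu> \<noteq> 0"
    and frob_x: "\<And>k. frob (x $ k) \<in> {\<mu> * x $ k, - (\<mu> * x $ k)}" and "qf (mat 1) x = 0"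
  shows "x = 0"
proof -
  have sum: "(x $ 1) ^ 2 + (x $ 2) ^ 2 + (x $ 3) ^ 2 = 0"
    using \<open>qf (mat 1) x = 0\<close> by (simp add: qf_mat_1)
  note eigen = frob_eigen_sum_squares[OF x[rule_format] x[rule_format] x[rule_format] \<open>\<mu> \<noteq> 0\<close>
      frob_x frob_x frob_x]
  have "x $ 1 = 0"
    using eigen[OF sum] .
  moreover have "x $ 2 = 0"
    using eigen[of 2 1 3] sum by (simp add: ac_simps)
  moreover have "x $ 3 = 0"
    using eigen[of 3 1 2] sum by (simp add: ac_simps)
  ultimately have "x $ k = 0" for k
    using exhaust_3[of k] by auto
  then show ?thesis
    by (simp add: Finite_Cartesian_Product.vec_eq_iff)
qed

theorem lemma8p7:
  fixes \<psi> :: "(complex \<Rightarrow> complex) \<Rightarrow> complex^3^3"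
    and Q M :: "complex^3^3"
  assumes psi_V: "\<forall>\<sigma>\<in>galK. \<psi> \<sigma> \<in> kleinV"
    and psi_cocycle: "\<forall>\<sigma>\<in>galK. \<forall>\<tau>\<in>galK. \<psi> (\<sigma> \<circ> \<tau>) = \<psi> \<sigma> ** \<psi> \<tau>"
    and Q_rat: "\<forall>i j. Q$i$j \<in> \<rat>"
    and Q_sym: "transpose Q = Q"
    and M_K: "\<forall>i j. M$i$j \<in> Kprime"
    and M_inv: "invertible M"
    and F_iso: "\<exists>c. c \<noteq> 0 \<and> (\<forall>x. qf Q (M *v x) = c * qf (mat 1) x)"
    and twist: "\<forall>\<sigma>\<in>galK. \<exists>c. c \<noteq> 0 \<and> gal_mat \<sigma> M = scale_mat c M ** \<psi> \<sigma>"
  shows "\<not> (\<exists>x::complex^3. x \<noteq> 0 \<and> (\<forall>i. x$i \<in> \<rat>) \<and> qf Q x = 0)"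
proof
  assume "\<exists>x::complex^3. x \<noteq> 0 \<and> (\<forall>i. x$i \<in> \<rat>) \<and> qf Q x = 0"
  then obtain y :: "complex^3" where "y \<noteq> 0" and y: "\<forall>i. y $ i \<in> \<rat>" and "qf Q y = 0"
    by blast
  have "y $ i \<in> Kprime" for i
    using y[rule_format, of i] by (auto simp: Rats_def Kprime_of_rat)
  then obtain x where x: "\<forall>k. x $ k \<in> Kprime" and Mx: "M *v x = y"
    using Kprime_solve[OF M_K M_inv] by blast
  obtain c0 where "c0 \<noteq> 0" and "qf Q (M *v x) = c0 * qf (mat 1) x"
    using F_iso by blast
  then have "qf (mat 1) x = 0"
    using \<open>qf Q y = 0\<close> Mx by simp
  \<comment> \<open>Only the cocycle value at the Frobenius at 2 is used.\<close>
  obtain c where "c \<noteq> 0" and twist_frob: "gal_mat frob M = scale_mat c M ** \<psi> frob"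
    using twist frob_in_galK by blast
  have "frob (x $ k) \<in> {inverse c * x $ k, - (inverse c * x $ k)}" for k
    using frob_twisted_point_eigen[OF M_K M_inv twist_frob _ \<open>c \<noteq> 0\<close> x] psi_V frob_in_galK y Mx
    by blast
  then have "x = 0"
    using frob_eigen_isotropic_eq_0[OF x _ _ \<open>qf (mat 1) x = 0\<close>] \<open>c \<noteq> 0\<close>
    by (metis inverse_nonzero_iff_nonzero)
  with Mx \<open>y \<noteq> 0\<close> show False
    by simp
qed

end
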